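(* Let $q=2$, $1\leq r\leq 2m-1$, and let $s$ be an integer with $1<s\leq 2m-r$. Let $f$ be a symplectic basis function of degree $s$ and class $(0,\sigma,\tau,\upsilon)$, where $\sigma=\min\{2m-r-s+\delta(m>r)(m-r),\lfloor s/2\rfloor\}$, $\tau=s-2\sigma$, $\upsilon=m-\sigma-\tau$. Then: (a) if $\sigma<s/2-1$, there exists $g\in\mathbf F_2\operatorname{Sp}(V)$ such that $gf$ is of class $(0,\sigma+1,\tau-3,\upsilon+2)$; (b) if $\sigma=s/2-1$ or $\sigma=(s-1)/2$, there exists $g\in\mathbf F_2\operatorname{Sp}(V)$ such that $gf$ is of class $(0,\sigma,\tau-1,\upsilon+1)$; (c) if $\sigma=s/2$, there exists $g\in\mathbf F_2\operatorname{Sp}(V)$ such that $gf$ is of class $(0,\sigma-1,\tau+1,\upsilon)$.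
   Context: $k=\mathbf F_2$. $V$ is a $2m$-dimensional $k$-space with nondegenerate alternating form and symplectic basis with coordinate functions $x_1,\dots,x_m,y_m,\dots,y_1$; $\operatorname{Sp}(V)$ acts on functions $V\to k$ by linear substitution (note $x_i^2=x_i$ as functions), extended linearly to the group ring. $\delta(P)=1$ if $P$ holds and $0$ otherwise. In $k[X_1,\dots,X_m,Y_1,\dots,Y_m]$ put $W_i=X_iY_i$ and let $Z_i$ denote $X_i$ or $Y_i$. A square-free homogeneous polynomial $F$ is of class $(\rho,\sigma,\tau,\upsilon)$ if there is a partition of $\{1,\dots,m\}$ into $R=\{r_1,\dots,r_\rho\}$, $R'=\{r'_1,\dots,r'_\rho\}$, $S,T,U$ with $|S|=\sigma,|T|=\tau,|U|=\upsilon$ and $F=\prod_{i=1}^\rho(W_{r_i}+W_{r'_i})\prod_{i\in S}W_i\prod_{i\in T}Z_i$ (degree $2\rho+2\sigma+\tau$); a function is of that class if it equals $\phi(F')$ for some $F'$ of that class, where $\phi$ is evaluation $X_i\mapsto x_i,Y_i\mapsto y_i$. $P^\lambda_\ell$ is the set of such polynomials with $2\rho+2\sigma+\tau=\lambda$ and $\sigma\leq\ell$; choose $B^\lambda_0\subseteq P^\lambda_0$ maximal linearly independent and inductively $B^\lambda_\ell=B^\lambda_{\ell-1}\cup P'^\lambda_\ell$ ($P'^\lambda_\ell\subseteq P^\lambda_\ell$) a basis of the span of $P^\lambda_\ell$. For $q=2$ a symplectic basis function of degree $\lambda$ is $\phi(F)$ with $F\in B^\lambda_{\lfloor\lambda/2\rfloor}$.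 *)

theory Defs
  imports Complex_Main "HOL-Library.Z2"
begin

text \<open>The field k = F_2 is the type bit. A vector of V (dim 2m) is a pair (x,y) of
coordinate functions, x i = x_i(v), y i = y_i(v) for i in {1..m}, zero elsewhere.\<close>

type_synonym vec = "(nat \<Rightarrow> bit) \<times> (nat \<Rightarrow> bit)"

definition Vsp :: "nat \<Rightarrow> vec set" where
  "Vsp m = {v. \<forall>i. (i = 0 \<or> m < i) \<longrightarrow> fst v i = 0 \<and> snd v i = 0}"

definition vadd :: "vec \<Rightarrow> vec \<Rightarrow> vec" where
  "vadd u v = (\<lambda>i. fst u i + fst v i, \<lambda>i. snd u i + snd v i)"

text \<open>The nondegenerate alternating form with symplectic basis e_1..e_m, f_m..f_1
(dual coordinates x_i, y_i).\<close>
definition sform :: "nat \<Rightarrow> vec \<Rightarrow> vec \<Rightarrow> bit" where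
  "sform m u v = (\<Sum>i\<in>{1..m}. fst u i * snd v i + snd u i * fst v i)"

text \<open>Sp(V): bijective additive (= F_2-linear) maps of V preserving the form,
extended by the identity outside V so that each group element is a unique HOL function.\<close>
definition Sp :: "nat \<Rightarrow> (vec \<Rightarrow> vec) set" where
  "Sp m = {h. bij_betw h (Vsp m) (Vsp m)
              \<and> (\<forall>u\<in>Vsp m. \<forall>v\<in>Vsp m. h (vadd u v) = vadd (h u) (h v))
              \<and> (\<forall>u\<in>Vsp m. \<forall>v\<in>Vsp m. sform m (h u) (h v) = sform m u v)
              \<and> (\<forall>v. v \<notin> Vsp m \<longrightarrow> h v = v)}"

text \<open>Action of the group ring F_2 Sp(V) (elements = coefficient functions Sp(V) \<rightarrow> F_2)
on functions V \<rightarrow> F_2: h acts by linear substitution (h f)(v) = f(h^{-1} v).\<close>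
definition gr_act :: "nat \<Rightarrow> ((vec \<Rightarrow> vec) \<Rightarrow> bit) \<Rightarrow> (vec \<Rightarrow> bit) \<Rightarrow> (vec \<Rightarrow> bit)" where
  "gr_act m g f = (\<lambda>v. \<Sum>h\<in>Sp m. g h * f (inv_into (Vsp m) h v))"

text \<open>Polynomials in k[X_1..X_m,Y_1..Y_m]: a variable is (False,i) = X_i or (True,i) = Y_i;
a square-free monomial is a finite set of variables; a polynomial over F_2 is the
finite set of monomials with coefficient 1.\<close>
type_synonym var = "bool \<times> nat"
type_synonym mono = "var set"
type_synonym poly = "mono set"

definition Wv :: "nat \<Rightarrow> mono" where
  "Wv i = {(False, i), (True, i)}"

text \<open>F = prod_{i<rho} (W_{r i} + W_{r' i}) * prod_{i in S} W_i * prod_{i in T} Z_i,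
where Z_i = X_i if z i = False and Y_i if z i = True. Expanding the product
(all factors in disjoint variables) gives the set of monomials below.\<close>
definition classpoly :: "nat \<Rightarrow> nat \<Rightarrow> nat \<Rightarrow> nat \<Rightarrow> nat \<Rightarrow> poly \<Rightarrow> bool" where
  "classpoly m \<rho> \<sigma> \<tau> \<upsilon> F \<longleftrightarrow>
     (\<exists>r r' S T U (z :: nat \<Rightarrow> bool).
        inj_on r {..<\<rho>} \<and> inj_on r' {..<\<rho>} \<and>
        r ` {..<\<rho>} \<inter> r' ` {..<\<rho>} = {} \<and>
        r ` {..<\<rho>} \<inter> S = {} \<and> r ` {..<\<rho>} \<inter> T = {} \<and> r ` {..<\<rho>} \<inter> U = {} \<and>
        r' ` {..<\<rho>} \<inter> S = {} \<and> r' ` {..<\<rho>} \<inter> T = {} \<and> r' ` {..<\<rho>} \<inter> U = {} \<and>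
        S \<inter> T = {} \<and> S \<inter> U = {} \<and> T \<inter> U = {} \<and>
        r ` {..<\<rho>} \<union> r' ` {..<\<rho>} \<union> S \<union> T \<union> U = {1..m} \<and>
        card S = \<sigma> \<and> card T = \<tau> \<and> card U = \<upsilon> \<and>
        F = {M. \<exists>c :: nat \<Rightarrow> bool.
               M = (\<Union>i<\<rho>. Wv (if c i then r i else r' i)) \<union> (\<Union>i\<in>S. Wv i)
                   \<union> {(z i, i) | i. i \<in> T}})"

definition coord :: "var \<Rightarrow> vec \<Rightarrow> bit" where
  "coord w v = (if fst w then snd v (snd w) else fst v (snd w))"

definition phi :: "poly \<Rightarrow> vec \<Rightarrow> bit" where
  "phi F v = (\<Sum>M\<in>F. \<Prod>w\<in>M. coord w v)"

definition fun_of_class :: "nat \<Rightarrow> nat \<Rightarrow> nat \<Rightarrow> nat \<Rightarrow> nat \<Rightarrow> (vec \<Rightarrow> bit) \<Rightarrow> bool" where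
  "fun_of_class m \<rho> \<sigma> \<tau> \<upsilon> f \<longleftrightarrow>
     (\<exists>F. classpoly m \<rho> \<sigma> \<tau> \<upsilon> F \<and> (\<forall>v\<in>Vsp m. f v = phi F v))"

definition Pset :: "nat \<Rightarrow> nat \<Rightarrow> nat \<Rightarrow> poly set" where
  "Pset m lam l = {F. \<exists>\<rho> \<sigma> \<tau> \<upsilon>. classpoly m \<rho> \<sigma> \<tau> \<upsilon> F \<and> 2*\<rho> + 2*\<sigma> + \<tau> = lam \<and> \<sigma> \<le> l}"

text \<open>Linear algebra over F_2 in the polynomial ring: sums are symmetric differences.\<close>
definition psum :: "poly set \<Rightarrow> poly" where
  "psum A = {M. odd (card {F\<in>A. M \<in> F})}"

definition plin_indep :: "poly set \<Rightarrow> bool" where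
  "plin_indep A \<longleftrightarrow> (\<forall>A'. A' \<subseteq> A \<and> finite A' \<and> A' \<noteq> {} \<longrightarrow> psum A' \<noteq> {})"

definition pspan :: "poly set \<Rightarrow> poly set" where
  "pspan A = {psum A' | A'. A' \<subseteq> A \<and> finite A'}"

definition basis_chain :: "nat \<Rightarrow> nat \<Rightarrow> nat \<Rightarrow> (nat \<Rightarrow> poly set) \<Rightarrow> bool" where
  "basis_chain m lam L B \<longleftrightarrow>
     B 0 \<subseteq> Pset m lam 0 \<and> plin_indep (B 0) \<and>
     (\<forall>F \<in> Pset m lam 0 - B 0. \<not> plin_indep (insert F (B 0))) \<and>
     (\<forall>l\<in>{1..L}. \<exists>P'. P' \<subseteq> Pset m lam l \<and> B l = B (l - 1) \<union> P' \<and>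
                      plin_indep (B l) \<and> pspan (B l) = pspan (Pset m lam l))"

definition sympl_basis_fun :: "nat \<Rightarrow> nat \<Rightarrow> (vec \<Rightarrow> bit) \<Rightarrow> bool" where
  "sympl_basis_fun m lam f \<longleftrightarrow>
     (\<exists>B F. basis_chain m lam (lam div 2) B \<and> F \<in> B (lam div 2) \<and> (\<forall>v\<in>Vsp m. f v = phi F v))"

end

theory Submission
  imports Defs "HOL-Library.FuncSet"
begin

(*
  A function of class (0,\<sigma>,\<tau>,\<upsilon>) is a single monomial  \<Prod>_{i\<in>S} x_i y_i * \<Prod>_{i\<in>T} Z_i,
  where Z_i is x_i or y_i.  Writing Z'_i for the coordinate of index i other than Z_i, the
  following substitutions preserve the symplectic form and hence lie in Sp(V):
     E_ab : Z_a := Z_a + Z_b,  Z'_b := Z'_b + Z'_a,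
     D_a  : Z_a := Z_a + Z'_a,
     O_ab : Z_a := Z_a + Z'_b, Z_b := Z_b + Z'_a.
  Every finite sum of substitutions is the action of an element of the group ring
  (group_ring_sum).  When all substitutions involved only move the coordinates with index
  in a small set K, they leave the factors of the monomial outside K untouched
  (local_rewrite), so each case of the lemma reduces to an identity between polynomials in
  at most three pairs of variables (the lemmas named local_identity), checked pointwise over F_2:
    (c) x_a y_a            is mapped to  Z'_a          (class (0,\<sigma>-1,\<tau>+1,\<upsilon>)),
    (b) Z_a Z_b or W_i Z_a is mapped to  Z_b or W_i    (class (0,\<sigma>,\<tau>-1,\<upsilon>+1)),
    (a) Z_a Z_b Z_c        is mapped to  x_c y_c       (class (0,\<sigma>+1,\<tau>-3,\<upsilon>+2)).
  The numerical hypotheses of the lemma only guarantee that S and T are large enough for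
  the respective case.
*)

text \<open>Over F_2 we keep the ring operations + and * (instead of xor/and) as normal forms.\<close>
declare add_bit_eq_xor[simp del] mult_bit_eq_and[simp del]

section \<open>Coordinates adapted to a choice of the variables Z_i\<close>

definition Wc :: "(nat \<Rightarrow> bool) \<Rightarrow> vec \<Rightarrow> nat \<Rightarrow> bit" where
  "Wc z v i = (if z i then snd v i else fst v i)"
definition Wd :: "(nat \<Rightarrow> bool) \<Rightarrow> vec \<Rightarrow> nat \<Rightarrow> bit" where
  "Wd z v i = (if z i then fst v i else snd v i)"
definition mk :: "(nat \<Rightarrow> bool) \<Rightarrow> (nat \<Rightarrow> bit) \<Rightarrow> (nat \<Rightarrow> bit) \<Rightarrow> vec" where
  "mk z A B = (\<lambda>i. if z i then B i else A i, \<lambda>i. if z i then A i else B i)"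

lemma Wc_mk[simp]: "Wc z (mk z A B) i = A i" by (simp add: Wc_def mk_def)
lemma Wd_mk[simp]: "Wd z (mk z A B) i = B i" by (simp add: Wd_def mk_def)
lemma Wc_vadd[simp]: "Wc z (vadd u v) i = Wc z u i + Wc z v i" by (simp add: Wc_def vadd_def)
lemma Wd_vadd[simp]: "Wd z (vadd u v) i = Wd z u i + Wd z v i" by (simp add: Wd_def vadd_def)

lemma vec_eqI:
  assumes "\<And>i. Wc z u i = Wc z v i" "\<And>i. Wd z u i = Wd z v i"
  shows "u = v"
proof -
  have "fst u i = fst v i \<and> snd u i = snd v i" for i
    using assms(1)[of i] assms(2)[of i] by (auto simp: Wc_def Wd_def split: if_splits)
  then show ?thesis by (simp add: prod_eq_iff fun_eq_iff)
qed

lemma Vsp_iff: "v \<in> Vsp m \<longleftrightarrow> (\<forall>i. (i = 0 \<or> m < i) \<longrightarrow> Wc z v i = 0 \<and> Wd z v i = 0)"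
proof -
  have "(Wc z v i = 0 \<and> Wd z v i = 0) \<longleftrightarrow> (fst v i = 0 \<and> snd v i = 0)" for i
    by (cases "z i") (auto simp: Wc_def Wd_def)
  then show ?thesis by (simp add: Vsp_def)
qed

lemma vadd_Vsp: "u \<in> Vsp m \<Longrightarrow> v \<in> Vsp m \<Longrightarrow> vadd u v \<in> Vsp m"
  by (simp add: Vsp_def vadd_def)

lemma sform_W: "sform m u v = (\<Sum>i\<in>{1..m}. Wc z u i * Wd z v i + Wd z u i * Wc z v i)"
  unfolding sform_def by (rule sum.cong) (auto simp: Wc_def Wd_def)

lemma Wc_flip: "Wc (z(a := \<not> z a)) v a = Wd z v a" by (simp add: Wc_def Wd_def)

section \<open>Elements of Sp(V)\<close>

lemma Sp_intro:
  assumes "\<And>v. v \<in> Vsp m \<Longrightarrow> h v \<in> Vsp m"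
    and "\<And>v. v \<in> Vsp m \<Longrightarrow> h (h v) = v"
    and "\<And>u v. u \<in> Vsp m \<Longrightarrow> v \<in> Vsp m \<Longrightarrow> h (vadd u v) = vadd (h u) (h v)"
    and "\<And>u v. u \<in> Vsp m \<Longrightarrow> v \<in> Vsp m \<Longrightarrow> sform m (h u) (h v) = sform m u v"
    and "\<And>v. v \<notin> Vsp m \<Longrightarrow> h v = v"
  shows "h \<in> Sp m"
proof -
  have "bij_betw h (Vsp m) (Vsp m)"
    by (rule bij_betw_byWitness[where f'=h]) (use assms(1,2) in auto)
  then show ?thesis unfolding Sp_def using assms(3-5) by blast
qed

text \<open>The form is unchanged if the same term X is added to the summands of index a and b
  (for a = b the two additions cancel): this is how the generators below preserve it.\<close>
lemma sum_add_twice: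
  fixes t t' :: "nat \<Rightarrow> bit"
  assumes "a \<in> {1..m}" "b \<in> {1..m}"
    and "\<And>i. t' i = t i + (if i = a then X else 0) + (if i = b then X else 0)"
  shows "(\<Sum>i\<in>{1..m}. t' i) = (\<Sum>i\<in>{1..m}. t i)"
proof -
  have "(\<Sum>i\<in>{1..m}. t' i) = (\<Sum>i\<in>{1..m}. t i) + (\<Sum>i\<in>{1..m}. if i = a then X else 0)
          + (\<Sum>i\<in>{1..m}. if i = b then X else 0)"
    by (simp only: assms(3) sum.distrib)
  also have "\<dots> = (\<Sum>i\<in>{1..m}. t i) + X + X"
    using assms(1,2) by simp
  finally show ?thesis by simp
qed

definition Em :: "nat \<Rightarrow> (nat \<Rightarrow> bool) \<Rightarrow> nat \<Rightarrow> nat \<Rightarrow> vec \<Rightarrow> vec" where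
  "Em m z a b v = (if v \<in> Vsp m then mk z ((Wc z v)(a := Wc z v a + Wc z v b))
                      ((Wd z v)(b := Wd z v b + Wd z v a)) else v)"
definition Pd :: "nat \<Rightarrow> (nat \<Rightarrow> bool) \<Rightarrow> nat \<Rightarrow> vec \<Rightarrow> vec" where
  "Pd m z a v = (if v \<in> Vsp m then mk z ((Wc z v)(a := Wc z v a + Wd z v a)) (Wd z v) else v)"
definition Po :: "nat \<Rightarrow> (nat \<Rightarrow> bool) \<Rightarrow> nat \<Rightarrow> nat \<Rightarrow> vec \<Rightarrow> vec" where
  "Po m z a b v = (if v \<in> Vsp m then mk z ((Wc z v)(a := Wc z v a + Wd z v b,
                      b := Wc z v b + Wd z v a)) (Wd z v) else v)"

context
  fixes m :: nat and z :: "nat \<Rightarrow> bool" and a b :: nat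
  assumes a: "a \<in> {1..m}" and b: "b \<in> {1..m}" and ab: "a \<noteq> b"
begin

lemma Wc_Em[simp]: "v \<in> Vsp m \<Longrightarrow>
    Wc z (Em m z a b v) i = (if i = a then Wc z v a + Wc z v b else Wc z v i)"
  by (simp add: Em_def)
lemma Wd_Em[simp]: "v \<in> Vsp m \<Longrightarrow>
    Wd z (Em m z a b v) i = (if i = b then Wd z v b + Wd z v a else Wd z v i)"
  by (simp add: Em_def)
lemma Em_Vsp[simp]: "v \<in> Vsp m \<Longrightarrow> Em m z a b v \<in> Vsp m"
  using a b by (subst Vsp_iff[where z=z]) (auto simp: Vsp_iff[where z=z, of v])

lemma Em_Sp: "Em m z a b \<in> Sp m"
proof (rule Sp_intro)
  fix v assume v: "v \<in> Vsp m"
  show "Em m z a b (Em m z a b v) = v"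
    by (rule vec_eqI[where z=z]) (use v ab in auto)
next
  fix u v assume u: "u \<in> Vsp m" and v: "v \<in> Vsp m"
  show "Em m z a b (vadd u v) = vadd (Em m z a b u) (Em m z a b v)"
    by (rule vec_eqI[where z=z]) (use u v vadd_Vsp in \<open>auto simp: algebra_simps\<close>)
  show "sform m (Em m z a b u) (Em m z a b v) = sform m u v"
    unfolding sform_W[where z=z]
    by (rule sum_add_twice[OF a b, where X="Wc z u b * Wd z v a + Wd z u a * Wc z v b"])
       (use u v ab in \<open>auto simp: algebra_simps\<close>)
qed (blast intro: Em_Vsp, simp add: Em_def)

lemma Wc_Po[simp]: "v \<in> Vsp m \<Longrightarrow> Wc z (Po m z a b v) i =
   (if i = a then Wc z v a + Wd z v b else if i = b then Wc z v b + Wd z v a else Wc z v i)"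
  using ab by (simp add: Po_def)
lemma Wd_Po[simp]: "v \<in> Vsp m \<Longrightarrow> Wd z (Po m z a b v) i = Wd z v i"
  by (simp add: Po_def)
lemma Po_Vsp[simp]: "v \<in> Vsp m \<Longrightarrow> Po m z a b v \<in> Vsp m"
  using a b by (subst Vsp_iff[where z=z]) (auto simp: Vsp_iff[where z=z, of v])

lemma Po_Sp: "Po m z a b \<in> Sp m"
proof (rule Sp_intro)
  fix v assume v: "v \<in> Vsp m"
  show "Po m z a b (Po m z a b v) = v"
    by (rule vec_eqI[where z=z]) (use v ab in auto)
next
  fix u v assume u: "u \<in> Vsp m" and v: "v \<in> Vsp m"
  show "Po m z a b (vadd u v) = vadd (Po m z a b u) (Po m z a b v)"
    by (rule vec_eqI[where z=z]) (use u v vadd_Vsp in \<open>auto simp: algebra_simps\<close>)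
  show "sform m (Po m z a b u) (Po m z a b v) = sform m u v"
    unfolding sform_W[where z=z]
    by (rule sum_add_twice[OF a b, where X="Wd z u b * Wd z v a + Wd z u a * Wd z v b"])
       (use u v ab in \<open>auto simp: algebra_simps\<close>)
qed (blast intro: Po_Vsp, simp add: Po_def)

end

context
  fixes m :: nat and z :: "nat \<Rightarrow> bool" and a :: nat
  assumes a: "a \<in> {1..m}"
begin

lemma Wc_Pd[simp]: "v \<in> Vsp m \<Longrightarrow>
    Wc z (Pd m z a v) i = (if i = a then Wc z v a + Wd z v a else Wc z v i)"
  by (simp add: Pd_def)
lemma Wd_Pd[simp]: "v \<in> Vsp m \<Longrightarrow> Wd z (Pd m z a v) i = Wd z v i"
  by (simp add: Pd_def)
lemma Pd_Vsp[simp]: "v \<in> Vsp m \<Longrightarrow> Pd m z a v \<in> Vsp m"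
  using a by (subst Vsp_iff[where z=z]) (auto simp: Vsp_iff[where z=z, of v])

lemma Pd_Sp: "Pd m z a \<in> Sp m"
proof (rule Sp_intro)
  fix v assume v: "v \<in> Vsp m"
  show "Pd m z a (Pd m z a v) = v"
    by (rule vec_eqI[where z=z]) (use v in auto)
next
  fix u v assume u: "u \<in> Vsp m" and v: "v \<in> Vsp m"
  show "Pd m z a (vadd u v) = vadd (Pd m z a u) (Pd m z a v)"
    by (rule vec_eqI[where z=z]) (use u v vadd_Vsp in \<open>auto simp: algebra_simps\<close>)
  show "sform m (Pd m z a u) (Pd m z a v) = sform m u v"
    unfolding sform_W[where z=z]
    by (rule sum_add_twice[OF a a, where X="Wd z u a * Wd z v a"])
       (use u v in \<open>auto simp: algebra_simps\<close>)
qed (blast intro: Pd_Vsp, simp add: Pd_def)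

end

lemma Sp_Vsp: "h \<in> Sp m \<Longrightarrow> v \<in> Vsp m \<Longrightarrow> h v \<in> Vsp m"
  by (auto simp: Sp_def bij_betw_def)

lemma Sp_out: "h \<in> Sp m \<Longrightarrow> v \<notin> Vsp m \<Longrightarrow> h v = v"
  unfolding Sp_def by blast

lemma id_Sp: "id \<in> Sp m"
  by (simp add: Sp_def bij_betw_def)

lemma Sp_comp:
  assumes h1: "h1 \<in> Sp m" and h2: "h2 \<in> Sp m"
  shows "h1 \<circ> h2 \<in> Sp m"
  unfolding Sp_def mem_Collect_eq
proof (intro conjI ballI allI impI)
  show "bij_betw (h1 \<circ> h2) (Vsp m) (Vsp m)"
    using h1 h2 by (auto simp: Sp_def intro: bij_betw_trans)
  fix u v assume u: "u \<in> Vsp m" and v: "v \<in> Vsp m"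
  show "(h1 \<circ> h2) (vadd u v) = vadd ((h1 \<circ> h2) u) ((h1 \<circ> h2) v)"
    using h1 h2 u v Sp_Vsp[OF h2] by (simp add: Sp_def)
  show "sform m ((h1 \<circ> h2) u) ((h1 \<circ> h2) v) = sform m u v"
    using h1 h2 u v Sp_Vsp[OF h2] by (simp add: Sp_def)
next
  fix v assume "v \<notin> Vsp m"
  then show "(h1 \<circ> h2) v = v" using Sp_out[OF h1] Sp_out[OF h2] by simp
qed

section \<open>Sums of substitutions are realised in the group ring\<close>

lemma finite_Vsp: "finite (Vsp m)"
proof -
  let ?A = "{f :: nat \<Rightarrow> bit. \<forall>x. (x \<in> {1..m} \<longrightarrow> f x \<in> UNIV) \<and> (x \<notin> {1..m} \<longrightarrow> f x = 0)}"
  have bit_UNIV: "(UNIV :: bit set) = {0, 1}" by (auto intro: bit.exhaust)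
  have "finite ?A" by (intro finite_set_of_finite_funs) (simp_all add: bit_UNIV)
  then have "finite (?A \<times> ?A)" by simp
  moreover have "Vsp m \<subseteq> ?A \<times> ?A"
    by (auto simp: Vsp_def Suc_le_eq)
  ultimately show ?thesis by (rule finite_subset[rotated])
qed

text \<open>Sp(V) is finite, so the sum defining the group-ring action is a genuine finite sum.\<close>
lemma finite_Sp: "finite (Sp m)"
proof (rule finite_imageD)
  show "inj_on (\<lambda>h. restrict h (Vsp m)) (Sp m)"
  proof (rule inj_onI, rule ext)
    fix h1 h2 v assume h: "h1 \<in> Sp m" "h2 \<in> Sp m"
      and e: "restrict h1 (Vsp m) = restrict h2 (Vsp m)"
    show "h1 v = h2 v"
    proof (cases "v \<in> Vsp m")
      case True
      then show ?thesis using fun_cong[OF e, of v] by simp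
    next
      case False
      then show ?thesis using Sp_out[OF h(1)] Sp_out[OF h(2)] by simp
    qed
  qed
  have "(\<lambda>h. restrict h (Vsp m)) ` Sp m \<subseteq> Vsp m \<rightarrow>\<^sub>E Vsp m"
    by (auto simp: Sp_def bij_betw_def)
  then show "finite ((\<lambda>h. restrict h (Vsp m)) ` Sp m)"
    by (rule finite_subset) (simp add: finite_PiE finite_Vsp)
qed

definition hinv :: "nat \<Rightarrow> (vec \<Rightarrow> vec) \<Rightarrow> vec \<Rightarrow> vec" where
  "hinv m h = (\<lambda>v. if v \<in> Vsp m then inv_into (Vsp m) h v else v)"

context
  fixes m h assumes h: "h \<in> Sp m"
begin

lemma h_bij: "bij_betw h (Vsp m) (Vsp m)" using h by (simp add: Sp_def)

lemma hinv_Vsp: "v \<in> Vsp m \<Longrightarrow> hinv m h v \<in> Vsp m"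
  using h_bij by (simp add: hinv_def bij_betw_def) (metis inv_into_into)
lemma h_hinv: "v \<in> Vsp m \<Longrightarrow> h (hinv m h v) = v"
  using h_bij by (simp add: hinv_def bij_betw_def) (metis f_inv_into_f)
lemma hinv_h: "v \<in> Vsp m \<Longrightarrow> hinv m h (h v) = v"
  using h_bij Sp_Vsp[OF h] by (simp add: hinv_def bij_betw_def)

lemma hinv_Sp: "hinv m h \<in> Sp m"
  unfolding Sp_def mem_Collect_eq
proof (intro conjI ballI allI impI)
  show "bij_betw (hinv m h) (Vsp m) (Vsp m)"
    by (rule bij_betw_byWitness[where f'=h]) (auto simp: hinv_h h_hinv hinv_Vsp Sp_Vsp[OF h])
  fix u v assume u: "u \<in> Vsp m" and v: "v \<in> Vsp m"
  have "h (vadd (hinv m h u) (hinv m h v)) = vadd u v"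
    using h u v hinv_Vsp by (simp add: Sp_def h_hinv)
  then have "hinv m h (vadd u v) = hinv m h (h (vadd (hinv m h u) (hinv m h v)))" by simp
  also have "\<dots> = vadd (hinv m h u) (hinv m h v)"
    by (rule hinv_h) (simp add: vadd_Vsp hinv_Vsp u v)
  finally show "hinv m h (vadd u v) = vadd (hinv m h u) (hinv m h v)" .
  have "sform m (hinv m h u) (hinv m h v) = sform m (h (hinv m h u)) (h (hinv m h v))"
    using h u v hinv_Vsp by (simp add: Sp_def)
  then show "sform m (hinv m h u) (hinv m h v) = sform m u v" by (simp add: h_hinv u v)
next
  fix v assume "v \<notin> Vsp m" then show "hinv m h v = v" by (simp add: hinv_def)
qed

text \<open>The group element hinv acts on functions by substituting h.\<close>
lemma inv_hinv: "v \<in> Vsp m \<Longrightarrow> inv_into (Vsp m) (hinv m h) v = h v"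
proof (rule inv_into_f_eq)
  show "inj_on (hinv m h) (Vsp m)" using hinv_Sp by (simp add: Sp_def bij_betw_def)
qed (auto simp: Sp_Vsp[OF h] hinv_h)

end

lemma group_ring_sum:
  assumes "set hs \<subseteq> Sp m"
  shows "\<exists>g. \<forall>v\<in>Vsp m. gr_act m g f v = (\<Sum>h\<leftarrow>hs. f (h v))"
  using assms
proof (induction hs)
  case Nil
  show ?case by (rule exI[where x="\<lambda>_. 0"]) (simp add: gr_act_def)
next
  case (Cons h hs)
  then obtain g where g: "\<forall>v\<in>Vsp m. gr_act m g f v = (\<Sum>h\<leftarrow>hs. f (h v))" by auto
  have h: "h \<in> Sp m" using Cons by simp
  define k where "k = hinv m h"
  have k: "k \<in> Sp m" using hinv_Sp[OF h] by (simp add: k_def)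
  define g' where "g' = (\<lambda>l. g l + (if l = k then 1 else 0))"
  show ?case
  proof (rule exI[where x=g'], intro ballI)
    fix v assume v: "v \<in> Vsp m"
    have "gr_act m g' f v = gr_act m g f v
            + (\<Sum>l\<in>Sp m. (if l = k then 1 else 0) * f (inv_into (Vsp m) l v))"
      unfolding gr_act_def g'_def by (simp only: distrib_right sum.distrib)
    also have "(\<Sum>l\<in>Sp m. (if l = k then 1 else 0) * f (inv_into (Vsp m) l v))
             = (\<Sum>l\<in>Sp m. if l = k then f (inv_into (Vsp m) l v) else 0)"
      by (rule sum.cong) auto
    also have "\<dots> = f (inv_into (Vsp m) k v)"
      using k finite_Sp by simp
    also have "\<dots> = f (h v)" using inv_hinv[OF h v] by (simp add: k_def)
    finally show "gr_act m g' f v = (\<Sum>h\<leftarrow>h # hs. f (h v))"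
      using g v by (simp add: add.commute)
  qed
qed

definition mono_val :: "(nat \<Rightarrow> bool) \<Rightarrow> nat set \<Rightarrow> nat set \<Rightarrow> vec \<Rightarrow> bit" where
  "mono_val z S T v = (\<Prod>i\<in>S. Wc z v i * Wd z v i) * (\<Prod>i\<in>T. Wc z v i)"

definition partition3 :: "nat \<Rightarrow> nat set \<Rightarrow> nat set \<Rightarrow> nat set \<Rightarrow> bool" where
  "partition3 m S T U \<longleftrightarrow> S \<inter> T = {} \<and> S \<inter> U = {} \<and> T \<inter> U = {} \<and> S \<union> T \<union> U = {1..m}"

lemma partition3_finite:
  assumes "partition3 m S T U" shows "finite S" "finite T" "finite U"
  using assms unfolding partition3_def by (metis finite_Un finite_atLeastAtMost)+

definition monomial :: "(nat \<Rightarrow> bool) \<Rightarrow> nat set \<Rightarrow> nat set \<Rightarrow> poly" where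
  "monomial z S T = {(\<Union>i\<in>S. Wv i) \<union> {(z i, i) | i. i \<in> T}}"

lemma classpoly_0_iff:
  "classpoly m 0 \<sigma> \<tau> \<upsilon> F \<longleftrightarrow> (\<exists>S T U z. partition3 m S T U \<and>
      card S = \<sigma> \<and> card T = \<tau> \<and> card U = \<upsilon> \<and> F = monomial z S T)"
  unfolding classpoly_def partition3_def monomial_def by auto

lemma phi_monomial:
  assumes fS: "finite S" and fT: "finite T" and d: "S \<inter> T = {}"
  shows "phi (monomial z S T) v = mono_val z S T v"
proof -
  have img: "{(z i, i) | i. i \<in> T} = (\<lambda>i. (z i, i)) ` T" by auto
  have disj: "(\<Union>i\<in>S. Wv i) \<inter> (\<lambda>i. (z i, i)) ` T = {}" using d by (auto simp: Wv_def)
  have "phi (monomial z S T) v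
      = (\<Prod>w\<in>(\<Union>i\<in>S. Wv i). coord w v) * (\<Prod>w\<in>(\<lambda>i. (z i, i)) ` T. coord w v)"
    unfolding phi_def monomial_def img using fS fT disj by (simp add: Wv_def prod.union_disjoint)
  also have "(\<Prod>w\<in>(\<Union>i\<in>S. Wv i). coord w v) = (\<Prod>i\<in>S. \<Prod>w\<in>Wv i. coord w v)"
    by (rule prod.UNION_disjoint[OF fS]) (auto simp: Wv_def)
  also have "\<dots> = (\<Prod>i\<in>S. Wc z v i * Wd z v i)"
    by (rule prod.cong) (auto simp: Wv_def coord_def Wc_def Wd_def mult.commute)
  also have "(\<Prod>w\<in>(\<lambda>i. (z i, i)) ` T. coord w v) = (\<Prod>i\<in>T. Wc z v i)"
    by (simp add: prod.reindex inj_on_def coord_def Wc_def cong: if_cong)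
  finally show ?thesis by (simp add: mono_val_def)
qed

lemma fun_of_class_0_iff:
  "fun_of_class m 0 \<sigma> \<tau> \<upsilon> f \<longleftrightarrow> (\<exists>S T U z. partition3 m S T U \<and>
      card S = \<sigma> \<and> card T = \<tau> \<and> card U = \<upsilon> \<and> (\<forall>v\<in>Vsp m. f v = mono_val z S T v))"
    (is "?lhs \<longleftrightarrow> ?rhs")
proof
  assume ?lhs
  then obtain S T U z where part: "partition3 m S T U"
    and card: "card S = \<sigma>" "card T = \<tau>" "card U = \<upsilon>"
    and f: "\<forall>v\<in>Vsp m. f v = phi (monomial z S T) v"
    unfolding fun_of_class_def classpoly_0_iff by blast
  have "phi (monomial z S T) v = mono_val z S T v" for v
    using part partition3_finite[OF part] by (intro phi_monomial) (auto simp: partition3_def)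
  then show ?rhs using part card f by auto
next
  assume ?rhs
  then obtain S T U z where part: "partition3 m S T U"
    and card: "card S = \<sigma>" "card T = \<tau>" "card U = \<upsilon>"
    and f: "\<forall>v\<in>Vsp m. f v = mono_val z S T v" by blast
  have "phi (monomial z S T) v = mono_val z S T v" for v
    using part partition3_finite[OF part] by (intro phi_monomial) (auto simp: partition3_def)
  then show ?lhs
    unfolding fun_of_class_def classpoly_0_iff using part card f by metis
qed

section \<open>Local rewriting of a monomial\<close>

lemma mono_val_split:
  assumes "finite S" "finite T"
  shows "mono_val z S T v = mono_val z (S \<inter> K) (T \<inter> K) v * mono_val z (S - K) (T - K) v"
  unfolding mono_val_def
  by (simp add: prod.Int_Diff[OF assms(1), of _ K] prod.Int_Diff[OF assms(2), of _ K] mult_ac)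

lemma mono_val_cong:
  assumes "\<And>i. i \<in> S \<union> T \<Longrightarrow> Wc z u i = Wc z' v i \<and> Wd z u i = Wd z' v i"
  shows "mono_val z S T u = mono_val z' S T v"
  unfolding mono_val_def using assms by (auto intro!: arg_cong2[where f="(*)"] prod.cong)

lemma local_rewrite:
  assumes hs: "set hs \<subseteq> Sp m"
    and fin: "finite S" "finite T" "finite S'" "finite T'"
    and frame: "\<And>v h i. v \<in> Vsp m \<Longrightarrow> h \<in> set hs \<Longrightarrow> i \<notin> K \<Longrightarrow>
                   Wc z (h v) i = Wc z v i \<and> Wd z (h v) i = Wd z v i"
    and outside: "S' - K = S - K" "T' - K = T - K" "\<And>i. i \<notin> K \<Longrightarrow> z' i = z i"
    and inside: "\<And>v. v \<in> Vsp m \<Longrightarrow>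
                   (\<Sum>h\<leftarrow>hs. mono_val z (S \<inter> K) (T \<inter> K) (h v)) = mono_val z' (S' \<inter> K) (T' \<inter> K) v"
    and fv: "\<forall>v\<in>Vsp m. f v = mono_val z S T v"
  shows "\<exists>g. \<forall>v\<in>Vsp m. gr_act m g f v = mono_val z' S' T' v"
proof -
  obtain g where g: "\<forall>v\<in>Vsp m. gr_act m g f v = (\<Sum>h\<leftarrow>hs. f (h v))"
    using group_ring_sum[OF hs] by blast
  have z': "Wc z v i = Wc z' v i \<and> Wd z v i = Wd z' v i" if "i \<notin> K" for v i
    using outside(3)[OF that] by (simp add: Wc_def Wd_def)
  have "gr_act m g f v = mono_val z' S' T' v" if v: "v \<in> Vsp m" for v
  proof -
    let ?out = "mono_val z (S - K) (T - K) v"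
    have "f (h v) = mono_val z (S \<inter> K) (T \<inter> K) (h v) * ?out" if h: "h \<in> set hs" for h
    proof -
      have "f (h v) = mono_val z S T (h v)" using fv hs h v Sp_Vsp by blast
      moreover have "mono_val z (S - K) (T - K) (h v) = ?out"
        by (rule mono_val_cong) (use frame[OF v h] in blast)
      ultimately show ?thesis using mono_val_split[OF fin(1,2), of z "h v" K] by simp
    qed
    then have "gr_act m g f v = (\<Sum>h\<leftarrow>hs. mono_val z (S \<inter> K) (T \<inter> K) (h v) * ?out)"
      using g v by (simp cong: map_cong)
    also have "\<dots> = mono_val z' (S' \<inter> K) (T' \<inter> K) v * ?out"
      by (simp only: sum_list_mult_const inside[OF v])
    also have "?out = mono_val z' (S' - K) (T' - K) v"
      unfolding outside(1,2) by (rule mono_val_cong) (use z' in blast)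
    finally show ?thesis using mono_val_split[OF fin(3,4), of z' v K] by simp
  qed
  then show ?thesis by blast
qed

lemma class_step:
  assumes "partition3 m S T U" "partition3 m S' T' U'"
    and "set hs \<subseteq> Sp m"
    and "\<And>v h i. v \<in> Vsp m \<Longrightarrow> h \<in> set hs \<Longrightarrow> i \<notin> K \<Longrightarrow>
                   Wc z (h v) i = Wc z v i \<and> Wd z (h v) i = Wd z v i"
    and "S' - K = S - K" "T' - K = T - K" "\<And>i. i \<notin> K \<Longrightarrow> z' i = z i"
    and "\<And>v. v \<in> Vsp m \<Longrightarrow>
                   (\<Sum>h\<leftarrow>hs. mono_val z (S \<inter> K) (T \<inter> K) (h v)) = mono_val z' (S' \<inter> K) (T' \<inter> K) v"
    and "\<forall>v\<in>Vsp m. f v = mono_val z S T v"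
  shows "\<exists>g. fun_of_class m 0 (card S') (card T') (card U') (gr_act m g f)"
proof -
  note fin = partition3_finite(1,2)[OF assms(1)] partition3_finite(1,2)[OF assms(2)]
  obtain g where "\<forall>v\<in>Vsp m. gr_act m g f v = mono_val z' S' T' v"
    using local_rewrite[OF assms(3) fin, of K z z' f] assms(4-9) by blast
  then show ?thesis using assms(2) unfolding fun_of_class_0_iff by blast
qed

section \<open>The local identities\<close>

text \<open>(c): x_a y_a + D_a(x_a y_a) = Z'_a, which is the variable Z_a for the flipped choice.\<close>
lemma local_identity_c:
  assumes "a \<in> {1..m}" "v \<in> Vsp m"
  shows "(\<Sum>h\<leftarrow>[id, Pd m z a]. mono_val z {a} {} (h v)) = mono_val (z(a := \<not> z a)) {} {a} v"
  using assms by (cases "Wc z v a"; cases "Wd z v a"; simp add: mono_val_def Wc_flip)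

lemma local_identity_b2:
  assumes "a \<in> {1..m}" "b \<in> {1..m}" "a \<noteq> b" "v \<in> Vsp m"
  shows "(\<Sum>h\<leftarrow>[id, Em m z a b]. mono_val z {} {a, b} (h v)) = mono_val z {} {b} v"
  using assms by (cases "Wc z v a"; cases "Wc z v b"; simp add: mono_val_def)

lemma local_identity_b1:
  assumes "a \<in> {1..m}" "i \<in> {1..m}" "a \<noteq> i" "v \<in> Vsp m"
  shows "(\<Sum>h\<leftarrow>[id, Em m z a i, Em m z a i \<circ> Em m z i a]. mono_val z {i} {a} (h v))
         = mono_val z {i} {} v"
  using assms
  by (cases "Wc z v a"; cases "Wc z v i"; cases "Wd z v a"; cases "Wd z v i";
      simp add: mono_val_def)

definition hs_a :: "nat \<Rightarrow> (nat \<Rightarrow> bool) \<Rightarrow> nat \<Rightarrow> nat \<Rightarrow> nat \<Rightarrow> (vec \<Rightarrow> vec) list" where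
  "hs_a m z a b c =
     [Po m z a b \<circ> Em m z b a,
      Pd m z a \<circ> Em m z c a,
      Pd m z a \<circ> Po m z b c \<circ> Em m z a c,
      Pd m z a \<circ> Po m z a c \<circ> Em m z c b \<circ> Pd m z b,
      Pd m z b \<circ> Pd m z c \<circ> Em m z b c,
      Pd m z a \<circ> Po m z b c \<circ> Em m z b a \<circ> Pd m z a,
      Pd m z b \<circ> Pd m z c \<circ> Em m z a c,
      Po m z a c \<circ> Pd m z c \<circ> Em m z b c]"

lemma local_identity_a:
  assumes "a \<in> {1..m}" "b \<in> {1..m}" "c \<in> {1..m}" "a \<noteq> b" "a \<noteq> c" "b \<noteq> c" "v \<in> Vsp m"
  shows "(\<Sum>h\<leftarrow>hs_a m z a b c. mono_val z {} {a, b, c} (h v)) = mono_val z {c} {} v"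
  using assms assms(4-6)[symmetric]
  by (simp add: hs_a_def mono_val_def)
     (cases "Wc z v a"; cases "Wc z v b"; cases "Wc z v c";
      cases "Wd z v a"; cases "Wd z v b"; cases "Wd z v c"; simp)

lemma class_step_c:
  assumes part: "partition3 m S T U" and a: "a \<in> S"
    and fv: "\<forall>v\<in>Vsp m. f v = mono_val z S T v"
  shows "\<exists>g. fun_of_class m 0 (card S - 1) (card T + 1) (card U) (gr_act m g f)"
proof -
  have am: "a \<in> {1..m}" and aT: "a \<notin> T" using a part by (auto simp: partition3_def)
  have "\<exists>g. fun_of_class m 0 (card (S - {a})) (card (insert a T)) (card U) (gr_act m g f)"
  proof (rule class_step[OF part _ _ _ _ _ _ _ fv, where K="{a}" and z'="z(a := \<not> z a)"])
    show "partition3 m (S - {a}) (insert a T) U" using part a by (auto simp: partition3_def)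
    show "set [id, Pd m z a] \<subseteq> Sp m" using id_Sp Pd_Sp[OF am] by auto
    show "\<And>v. v \<in> Vsp m \<Longrightarrow> (\<Sum>h\<leftarrow>[id, Pd m z a]. mono_val z (S \<inter> {a}) (T \<inter> {a}) (h v))
            = mono_val (z(a := \<not> z a)) ((S - {a}) \<inter> {a}) (insert a T \<inter> {a}) v"
      using local_identity_c[OF am] a aT by (simp add: Int_absorb1 Int_insert_left)
  qed (use am aT in auto)
  then show ?thesis using a aT partition3_finite[OF part] by simp
qed

lemma class_step_b2:
  assumes part: "partition3 m S T U" and a: "a \<in> T" and b: "b \<in> T" and ab: "a \<noteq> b"
    and fv: "\<forall>v\<in>Vsp m. f v = mono_val z S T v"
  shows "\<exists>g. fun_of_class m 0 (card S) (card T - 1) (card U + 1) (gr_act m g f)"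
proof -
  have am: "a \<in> {1..m}" and bm: "b \<in> {1..m}" and aU: "a \<notin> U" and SK: "S \<inter> {a, b} = {}"
    using a b part by (auto simp: partition3_def)
  have "\<exists>g. fun_of_class m 0 (card S) (card (T - {a})) (card (insert a U)) (gr_act m g f)"
  proof (rule class_step[OF part _ _ _ _ _ _ _ fv, where K="{a, b}" and z'=z])
    show "partition3 m S (T - {a}) (insert a U)" using part a by (auto simp: partition3_def)
    show "set [id, Em m z a b] \<subseteq> Sp m" using id_Sp Em_Sp[OF am bm ab] by auto
    have "T \<inter> {a, b} = {a, b}" "(T - {a}) \<inter> {a, b} = {b}" using a b ab by auto
    then show "\<And>v. v \<in> Vsp m \<Longrightarrow> (\<Sum>h\<leftarrow>[id, Em m z a b]. mono_val z (S \<inter> {a, b}) (T \<inter> {a, b}) (h v))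
            = mono_val z (S \<inter> {a, b}) ((T - {a}) \<inter> {a, b}) v"
      using local_identity_b2[OF am bm ab] SK by simp
  qed (use am bm ab in auto)
  then show ?thesis using a aU partition3_finite[OF part] by simp
qed

lemma class_step_b1:
  assumes part: "partition3 m S T U" and i: "i \<in> S" and a: "a \<in> T"
    and fv: "\<forall>v\<in>Vsp m. f v = mono_val z S T v"
  shows "\<exists>g. fun_of_class m 0 (card S) (card T - 1) (card U + 1) (gr_act m g f)"
proof -
  have am: "a \<in> {1..m}" and im: "i \<in> {1..m}" and ai: "a \<noteq> i" and aU: "a \<notin> U"
    and SK: "S \<inter> {i, a} = {i}" and TK: "T \<inter> {i, a} = {a}" "(T - {a}) \<inter> {i, a} = {}"
    using a i part by (auto simp: partition3_def)
  let ?hs = "[id, Em m z a i, Em m z a i \<circ> Em m z i a]"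
  have "\<exists>g. fun_of_class m 0 (card S) (card (T - {a})) (card (insert a U)) (gr_act m g f)"
  proof (rule class_step[OF part _ _ _ _ _ _ _ fv, where K="{i, a}" and z'=z])
    show "partition3 m S (T - {a}) (insert a U)" using part a by (auto simp: partition3_def)
    show "set ?hs \<subseteq> Sp m"
      using id_Sp Em_Sp[OF am im ai] Em_Sp[OF im am ai[symmetric]] Sp_comp by auto
    show "\<And>v. v \<in> Vsp m \<Longrightarrow> (\<Sum>h\<leftarrow>?hs. mono_val z (S \<inter> {i, a}) (T \<inter> {i, a}) (h v))
            = mono_val z (S \<inter> {i, a}) ((T - {a}) \<inter> {i, a}) v"
      unfolding SK TK by (rule local_identity_b1[OF am im ai])
  qed (use am im ai in auto)
  then show ?thesis using a aU partition3_finite[OF part] by simp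
qed

lemma class_step_a:
  assumes part: "partition3 m S T U" and abc: "a \<in> T" "b \<in> T" "c \<in> T" "a \<noteq> b" "a \<noteq> c" "b \<noteq> c"
    and fv: "\<forall>v\<in>Vsp m. f v = mono_val z S T v"
  shows "\<exists>g. fun_of_class m 0 (card S + 1) (card T - 3) (card U + 2) (gr_act m g f)"
proof -
  have m: "a \<in> {1..m}" "b \<in> {1..m}" "c \<in> {1..m}" and abU: "a \<notin> U" "b \<notin> U" and cS: "c \<notin> S"
    and SK: "S \<inter> {a, b, c} = {}" "insert c S \<inter> {a, b, c} = {c}"
    and TK: "T \<inter> {a, b, c} = {a, b, c}" "(T - {a, b, c}) \<inter> {a, b, c} = {}"
    using abc part by (auto simp: partition3_def)
  have "\<exists>g. fun_of_class m 0 (card (insert c S)) (card (T - {a, b, c})) (card (U \<union> {a, b}))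
            (gr_act m g f)"
  proof (rule class_step[OF part _ _ _ _ _ _ _ fv, where K="{a, b, c}" and z'=z])
    show "partition3 m (insert c S) (T - {a, b, c}) (U \<union> {a, b})"
      using part abc by (auto simp: partition3_def)
    show "set (hs_a m z a b c) \<subseteq> Sp m"
      using m abc by (simp add: hs_a_def Sp_comp Em_Sp Pd_Sp Po_Sp)
    show "\<And>v. v \<in> Vsp m \<Longrightarrow> (\<Sum>h\<leftarrow>hs_a m z a b c. mono_val z (S \<inter> {a, b, c}) (T \<inter> {a, b, c}) (h v))
            = mono_val z (insert c S \<inter> {a, b, c}) ((T - {a, b, c}) \<inter> {a, b, c}) v"
      unfolding SK TK by (rule local_identity_a[OF m abc(4-6)])
  qed (use m abc abc(4-6)[symmetric] in \<open>auto simp: hs_a_def\<close>)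
  moreover have "card (T - {a, b, c}) = card T - 3"
    using abc partition3_finite[OF part] by (subst card_Diff_subset) auto
  ultimately show ?thesis using abU cS abc(4) partition3_finite[OF part] by simp
qed

theorem lemma6p4:
  fixes m r s \<sigma> \<tau> \<upsilon> :: nat and f :: "vec \<Rightarrow> bit"
  assumes "1 \<le> r" and "r \<le> 2*m - 1"
    and "1 < s" and "s \<le> 2*m - r"
    and "\<sigma> = min (2*m - r - s + (if m > r then 1 else 0) * (m - r)) (s div 2)"
    and "\<tau> = s - 2*\<sigma>" and "\<upsilon> = m - \<sigma> - \<tau>"
    and "sympl_basis_fun m s f"
    and "fun_of_class m 0 \<sigma> \<tau> \<upsilon> f"
  shows "(real \<sigma> < real s / 2 - 1 \<longrightarrow>
            (\<exists>g. fun_of_class m 0 (\<sigma> + 1) (\<tau> - 3) (\<upsilon> + 2) (gr_act m g f)))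
       \<and> ((real \<sigma> = real s / 2 - 1 \<or> real \<sigma> = (real s - 1) / 2) \<longrightarrow>
            (\<exists>g. fun_of_class m 0 \<sigma> (\<tau> - 1) (\<upsilon> + 1) (gr_act m g f)))
       \<and> (real \<sigma> = real s / 2 \<longrightarrow>
            (\<exists>g. fun_of_class m 0 (\<sigma> - 1) (\<tau> + 1) \<upsilon> (gr_act m g f)))"
proof -
  obtain S T U z where part: "partition3 m S T U" and fv: "\<forall>v\<in>Vsp m. f v = mono_val z S T v"
    and card: "card S = \<sigma>" "card T = \<tau>" "card U = \<upsilon>"
    using assms(9) unfolding fun_of_class_0_iff by blast
  note \<tau> = assms(6) and s = assms(3)
  show ?thesis
  proof (intro conjI impI)
    assume "real \<sigma> < real s / 2 - 1"
    then have "3 \<le> card T" using card \<tau> by linarith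
    then obtain A where "A \<subseteq> T" "card A = 3" by (rule obtain_subset_with_card_n)
    then obtain a b c where "a \<in> T" "b \<in> T" "c \<in> T" "a \<noteq> b" "a \<noteq> c" "b \<noteq> c"
      by (auto simp: card_3_iff)
    then show "\<exists>g. fun_of_class m 0 (\<sigma> + 1) (\<tau> - 3) (\<upsilon> + 2) (gr_act m g f)"
      using class_step_a[OF part _ _ _ _ _ _ fv] card by simp
  next
    assume "real \<sigma> = real s / 2 - 1 \<or> real \<sigma> = (real s - 1) / 2"
    then consider "s = 2 * \<sigma> + 2" | "s = 2 * \<sigma> + 1" by (auto simp: field_simps)
    then show "\<exists>g. fun_of_class m 0 \<sigma> (\<tau> - 1) (\<upsilon> + 1) (gr_act m g f)"
    proof cases
      case 1
      then obtain A where "A \<subseteq> T" "card A = 2" using card \<tau> obtain_subset_with_card_n by auto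
      then obtain a b where "a \<in> T" "b \<in> T" "a \<noteq> b" by (auto simp: card_2_iff)
      then show ?thesis using class_step_b2[OF part _ _ _ fv] card by simp
    next
      case 2
      then have "S \<noteq> {}" "T \<noteq> {}" using card \<tau> s by auto
      then obtain i a where "i \<in> S" "a \<in> T" by blast
      then show ?thesis using class_step_b1[OF part _ _ fv] card by simp
    qed
  next
    assume "real \<sigma> = real s / 2"
    then have "S \<noteq> {}" "\<tau> = 0" using card \<tau> s by (auto simp: field_simps)
    then obtain a where "a \<in> S" "\<tau> = 0" by blast
    then show "\<exists>g. fun_of_class m 0 (\<sigma> - 1) (\<tau> + 1) \<upsilon> (gr_act m g f)"
      using class_step_c[OF part _ fv] card by simp
  qed
qed

end
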